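(* Let $\epsilon\in(0,1)$ and $x\in[0,1/2)$, and consider the iterated map $p\mapsto 2p^2(1-\epsilon)^2+4px\epsilon(1-\epsilon)+2x^2\epsilon^2$. For every initial value $p\in[0,1/2]$, the iterates converge to the fixed point $$p^*=\frac{1-4x\epsilon(1-\epsilon)-\sqrt{1-8\epsilon x(1-\epsilon)}}{4(1-\epsilon)^2},$$ and $p^*\le\epsilon$. *)

theory Defs
  imports Complex_Main
begin

definition iter_map :: "real \<Rightarrow> real \<Rightarrow> real \<Rightarrow> real" where
  "iter_map \<epsilon> x p = 2 * p^2 * (1 - \<epsilon>)^2 + 4 * p * x * \<epsilon> * (1 - \<epsilon>) + 2 * x^2 * \<epsilon>^2"

definition fixed_pt :: "real \<Rightarrow> real \<Rightarrow> real" where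
  "fixed_pt \<epsilon> x = (1 - 4 * x * \<epsilon> * (1 - \<epsilon>) - sqrt (1 - 8 * \<epsilon> * x * (1 - \<epsilon>))) / (4 * (1 - \<epsilon>)^2)"

end

theory Submission
  imports Defs
begin

text \<open>With \<open>a = 1 - \<epsilon>\<close> and \<open>b = x\<epsilon>\<close> the map is \<open>q \<mapsto> 2(aq + b)\<^sup>2\<close>, which is
  nondecreasing on \<open>[0, \<infinity>)\<close> and maps \<open>[0, 1/2]\<close> into itself. Iterating a monotone
  continuous self-map of an interval gives a monotone bounded sequence, whose limit is a fixed
  point. The map minus the identity is \<open>2a\<^sup>2(q - p\<^sup>*)(q - p\<^sup>+)\<close> with roots
  \<open>p\<^sup>* \<le> p\<^sup>+\<close>, so a point where the map lies below the diagonal is strictly between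
  the roots. Applied at \<open>1/2\<close> this gives \<open>p\<^sup>+ > 1/2\<close>, so the limit is \<open>p\<^sup>*\<close>; applied at
  \<open>\<epsilon>\<close> it gives \<open>p\<^sup>* < \<epsilon>\<close>.\<close>

lemma monoseq_iterates:
  fixes f :: "'a::linorder \<Rightarrow> 'a"
  assumes mono: "mono_on S f" and maps: "f ` S \<subseteq> S" and p: "p \<in> S"
  shows "monoseq (\<lambda>n. (f ^^ n) p)"
proof -
  have inS: "(f ^^ n) p \<in> S" for n
    using maps p by (induction n) (auto simp: image_subset_iff)
  have ascending: "(f ^^ n) p \<le> (f ^^ Suc n) p" if "p \<le> f p" for n
  proof (induction n)
    case (Suc n)
    then show ?case using mono_onD[OF mono inS[of n] inS[of "Suc n"]] by simp
  qed (use that in simp)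
  have descending: "(f ^^ Suc n) p \<le> (f ^^ n) p" if "f p \<le> p" for n
  proof (induction n)
    case (Suc n)
    then show ?case using mono_onD[OF mono inS[of "Suc n"] inS[of n]] by simp
  qed (use that in simp)
  show ?thesis
  proof (cases "p \<le> f p")
    case True
    then show ?thesis unfolding monoseq_Suc using ascending by blast
  next
    case False
    then have "f p \<le> p" by simp
    then show ?thesis unfolding monoseq_Suc using descending by simp
  qed
qed

lemma iterates_tendsto_fixed_point:
  fixes f :: "real \<Rightarrow> real"
  assumes cont: "continuous_on {lo..hi} f" and mono: "mono_on {lo..hi} f"
    and maps: "f ` {lo..hi} \<subseteq> {lo..hi}" and p: "p \<in> {lo..hi}"
  obtains L where "L \<in> {lo..hi}" "f L = L" "(\<lambda>n. (f ^^ n) p) \<longlonglongrightarrow> L"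
proof -
  let ?s = "\<lambda>n. (f ^^ n) p"
  have inS: "?s n \<in> {lo..hi}" for n
    using maps p by (induction n) (auto simp: image_subset_iff)
  have "\<bar>?s n\<bar> \<le> \<bar>lo\<bar> + \<bar>hi\<bar>" for n
    using inS[of n] by auto
  then have "Bseq ?s"
    by (intro BseqI') simp
  then obtain L where L: "?s \<longlonglongrightarrow> L"
    using Bseq_monoseq_convergent[OF _ monoseq_iterates[OF mono maps p]]
    by (auto simp: convergent_def)
  have LS: "L \<in> {lo..hi}"
    using closed_sequentially[OF closed_atLeastAtMost, of ?s] L inS by blast
  have "(\<lambda>n. f (?s n)) \<longlonglongrightarrow> f L"
    using continuous_on_tendsto_compose[OF cont L LS] inS by simp
  moreover have "(\<lambda>n. f (?s n)) \<longlonglongrightarrow> L"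
    using LIMSEQ_Suc[OF L] by simp
  ultimately have "f L = L"
    using LIMSEQ_unique by blast
  with LS L show ?thesis using that by blast
qed

definition quad_fixed_lo :: "real \<Rightarrow> real \<Rightarrow> real" where
  "quad_fixed_lo a b = (1 - 4*a*b - sqrt (1 - 8*a*b)) / (4*a^2)"

definition quad_fixed_hi :: "real \<Rightarrow> real \<Rightarrow> real" where
  "quad_fixed_hi a b = (1 - 4*a*b + sqrt (1 - 8*a*b)) / (4*a^2)"

lemma quad_map_minus_id_factor:
  fixes a b q :: real
  assumes "a \<noteq> 0" "8*a*b \<le> 1"
  shows "2*(a*q + b)^2 - q = 2*a^2 * (q - quad_fixed_lo a b) * (q - quad_fixed_hi a b)"
proof -
  have "(sqrt (1 - 8*a*b))^2 = 1 - 8*a*b"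
    using assms(2) by simp
  then show ?thesis
    using assms(1) unfolding quad_fixed_lo_def quad_fixed_hi_def
    by (simp add: field_simps power2_eq_square)
qed

lemma quad_fixed_lo_le_hi:
  fixes a b :: real
  assumes "8*a*b \<le> 1"
  shows "quad_fixed_lo a b \<le> quad_fixed_hi a b"
  unfolding quad_fixed_lo_def quad_fixed_hi_def using assms by (intro divide_right_mono) auto

lemma quad_map_below_diagonal:
  fixes a b q :: real
  assumes "a \<noteq> 0" "8*a*b \<le> 1" "2*(a*q + b)^2 < q"
  shows "quad_fixed_lo a b < q \<and> q < quad_fixed_hi a b"
proof -
  have "2*a^2 * ((q - quad_fixed_lo a b) * (q - quad_fixed_hi a b)) < 0"
    using assms(3) quad_map_minus_id_factor[OF assms(1,2), of q] by (simp only: mult.assoc)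
  then have "(q - quad_fixed_lo a b) * (q - quad_fixed_hi a b) < 0"
    using assms(1) by (simp add: mult_less_0_iff)
  then show ?thesis
    using quad_fixed_lo_le_hi[OF assms(2)] by (auto simp: mult_less_0_iff)
qed

lemma quad_map_fixed_point:
  fixes a b q :: real
  assumes "a \<noteq> 0" "8*a*b \<le> 1" "2*(a*q + b)^2 = q"
  shows "q = quad_fixed_lo a b \<or> q = quad_fixed_hi a b"
  using quad_map_minus_id_factor[OF assms(1,2), of q] assms by simp

lemma mono_on_quad_map:
  fixes a b :: real
  assumes "0 \<le> a" "0 \<le> b"
  shows "mono_on {0..} (\<lambda>q. 2*(a*q + b)^2)"
  using assms by (intro mono_onI) (simp add: power_mono mult_left_mono)

lemma iter_map_eq: "iter_map \<epsilon> x q = 2*((1 - \<epsilon>)*q + x*\<epsilon>)^2"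
  unfolding iter_map_def by (simp add: power2_eq_square algebra_simps)

lemma fixed_pt_eq_quad_fixed_lo: "fixed_pt \<epsilon> x = quad_fixed_lo (1 - \<epsilon>) (x*\<epsilon>)"
  unfolding fixed_pt_def quad_fixed_lo_def by (simp add: algebra_simps)

lemma quad_discriminant_pos:
  fixes \<epsilon> x :: real
  assumes "0 \<le> x" "x < 1/2"
  shows "8*(1 - \<epsilon>)*(x*\<epsilon>) < 1"
proof -
  have "\<epsilon>*(1 - \<epsilon>) \<le> 1/4"
    using zero_le_power2[of "\<epsilon> - 1/2"] by (simp add: power2_eq_square algebra_simps)
  then have "x*(\<epsilon>*(1 - \<epsilon>)) \<le> x/4"
    using mult_left_mono[OF _ assms(1)] by fastforce
  then show ?thesis
    using assms(2) by (simp add: algebra_simps)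
qed

lemma iter_map_half_lt:
  fixes \<epsilon> x :: real
  assumes "0 < \<epsilon>" "\<epsilon> \<le> 1" "0 \<le> x" "x < 1/2"
  shows "iter_map \<epsilon> x (1/2) < 1/2"
proof -
  have "x*\<epsilon> < (1/2)*\<epsilon>"
    using assms by (intro mult_strict_right_mono) auto
  moreover have "(1 - \<epsilon>)*(1/2) = 1/2 - \<epsilon>/2"
    by simp
  ultimately have "(1 - \<epsilon>)*(1/2) + x*\<epsilon> < 1/2"
    by linarith
  moreover have "0 \<le> (1 - \<epsilon>)*(1/2) + x*\<epsilon>"
    using assms by simp
  ultimately have "((1 - \<epsilon>)*(1/2) + x*\<epsilon>)^2 < (1/2)^2"
    by (simp add: power_strict_mono)
  then show ?thesis
    unfolding iter_map_eq by (simp add: power2_eq_square)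
qed

lemma iter_map_eps_lt:
  fixes \<epsilon> x :: real
  assumes "0 < \<epsilon>" "\<epsilon> < 1" "0 \<le> x" "x < 1/2"
  shows "iter_map \<epsilon> x \<epsilon> < \<epsilon>"
proof -
  have "(1 - \<epsilon> + x)^2 < (3/2 - \<epsilon>)^2"
    using assms by (intro power_strict_mono) auto
  then have "2*\<epsilon>*(1 - \<epsilon> + x)^2 < 2*\<epsilon>*(3/2 - \<epsilon>)^2"
    using assms(1) by simp
  also have "\<dots> \<le> 1"
  proof -
    have "1 - 2*\<epsilon>*(3/2 - \<epsilon>)^2 = 2*(\<epsilon> - 1/2)^2*(2 - \<epsilon>)"
      by (simp add: power2_eq_square algebra_simps add_divide_distrib[symmetric])
    moreover have "0 \<le> 2*(\<epsilon> - 1/2)^2*(2 - \<epsilon>)"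
      using assms by simp
    ultimately show ?thesis by linarith
  qed
  finally have "\<epsilon> * (2*\<epsilon>*(1 - \<epsilon> + x)^2) < \<epsilon>"
    using assms(1) by simp
  then show ?thesis
    unfolding iter_map_eq by (simp add: power2_eq_square algebra_simps)
qed

theorem mainTheorem10:
  fixes \<epsilon> x p :: real
  assumes "0 < \<epsilon>" "\<epsilon> < 1" "0 \<le> x" "x < 1/2" "0 \<le> p" "p \<le> 1/2"
  shows "(\<lambda>n. (iter_map \<epsilon> x ^^ n) p) \<longlonglongrightarrow> fixed_pt \<epsilon> x
         \<and> fixed_pt \<epsilon> x \<le> \<epsilon>"
proof -
  let ?f = "iter_map \<epsilon> x" and ?a = "1 - \<epsilon>" and ?b = "x*\<epsilon>"
  have a: "?a \<noteq> 0" and disc: "8*?a*?b \<le> 1"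
    using assms quad_discriminant_pos[of x \<epsilon>] by auto
  have f_eq: "?f = (\<lambda>q. 2*(?a*q + ?b)^2)"
    by (simp add: fun_eq_iff iter_map_eq)
  have mono: "mono_on {0..1/2} ?f"
    unfolding f_eq using assms by (intro mono_on_subset[OF mono_on_quad_map]) auto
  have half: "?f (1/2) < 1/2"
    using iter_map_half_lt assms by simp
  have maps: "?f ` {0..1/2} \<subseteq> {0..1/2}"
  proof (rule image_subsetI)
    fix q :: real
    assume q: "q \<in> {0..1/2}"
    then have "?f q \<le> ?f (1/2)"
      using mono_onD[OF mono] by auto
    with half show "?f q \<in> {0..1/2}"
      by (simp add: iter_map_eq)
  qed
  have cont: "continuous_on {0..1/2} ?f"
    unfolding f_eq by (intro continuous_intros)
  have "p \<in> {0..1/2}"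
    using assms by simp
  then obtain L where L: "L \<in> {0..1/2}" "?f L = L" "(\<lambda>n. (?f ^^ n) p) \<longlonglongrightarrow> L"
    using iterates_tendsto_fixed_point[OF cont mono maps] by blast
  have "1/2 < quad_fixed_hi ?a ?b"
    using quad_map_below_diagonal[OF a disc half[unfolded iter_map_eq]] by simp
  then have "L = quad_fixed_lo ?a ?b"
    using quad_map_fixed_point[OF a disc, of L] L by (auto simp: iter_map_eq)
  moreover have "quad_fixed_lo ?a ?b < \<epsilon>"
    using quad_map_below_diagonal[OF a disc iter_map_eps_lt[OF assms(1-4), unfolded iter_map_eq]]
    by simp
  ultimately show ?thesis
    using L by (simp add: fixed_pt_eq_quad_fixed_lo)
qed

end
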